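(* If $r\ge 2$ and $t\ge 1$, then $6\le \mathrm{gp}(P_r\boxtimes C_{2t+1})\le 7$. Moreover, if $t\in\{1,2\}$ or $r=2$, then $\mathrm{gp}(P_r\boxtimes C_{2t+1})=6$.
   Context: All graphs are finite and simple; $P_r$ is the path on $r$ vertices and $C_m$ the cycle on $m$ vertices. The strong product $G\boxtimes H$ has vertex set $V(G)\times V(H)$, with distinct $(g,h),(g',h')$ adjacent iff ($g=g'$ or $gg'\in E(G)$) and ($h=h'$ or $hh'\in E(H)$). For a connected graph $G$, a set $S\subseteq V(G)$ is a general position set if no three pairwise distinct vertices of $S$ lie on a common geodesic (shortest path); $\mathrm{gp}(G)$ is the maximum cardinality of a general position set. *)

theory Defs
  imports Main
begin

text \<open>A finite simple graph is represented by a vertex set and a symmetric,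
irreflexive adjacency relation (only its restriction to the vertex set matters).\<close>

type_synonym 'a graph = "'a set \<times> ('a \<Rightarrow> 'a \<Rightarrow> bool)"

definition verts :: "'a graph \<Rightarrow> 'a set" where "verts G = fst G"
definition adj :: "'a graph \<Rightarrow> 'a \<Rightarrow> 'a \<Rightarrow> bool" where "adj G = snd G"

definition path_graph :: "nat \<Rightarrow> nat graph" where
  "path_graph r = ({..<r}, \<lambda>i j. i + 1 = j \<or> j + 1 = i)"

text \<open>Cycle C_m on vertices 0..m-1 (m \<ge> 3).\<close>
definition cycle_graph :: "nat \<Rightarrow> nat graph" where
  "cycle_graph m = ({..<m}, \<lambda>i j. i \<noteq> j \<and> (j = (i + 1) mod m \<or> i = (j + 1) mod m))"

definition strong_product :: "'a graph \<Rightarrow> 'b graph \<Rightarrow> ('a \<times> 'b) graph" where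
  "strong_product G H = (verts G \<times> verts H,
     \<lambda>(g, h) (g', h'). (g, h) \<noteq> (g', h') \<and> (g = g' \<or> adj G g g') \<and> (h = h' \<or> adj H h h'))"

text \<open>A walk is a nonempty list of vertices, consecutive ones adjacent;
its length is the number of edges, length xs - 1.\<close>
definition is_walk :: "'a graph \<Rightarrow> 'a list \<Rightarrow> bool" where
  "is_walk G xs \<longleftrightarrow> xs \<noteq> [] \<and> set xs \<subseteq> verts G \<and>
     (\<forall>i. Suc i < length xs \<longrightarrow> adj G (xs ! i) (xs ! Suc i))"

definition dist :: "'a graph \<Rightarrow> 'a \<Rightarrow> 'a \<Rightarrow> nat" where
  "dist G u v = (LEAST n. \<exists>xs. is_walk G xs \<and> hd xs = u \<and> last xs = v \<and> length xs = Suc n)"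

definition geodesic :: "'a graph \<Rightarrow> 'a list \<Rightarrow> bool" where
  "geodesic G xs \<longleftrightarrow> is_walk G xs \<and> length xs = Suc (dist G (hd xs) (last xs))"

definition gp_set :: "'a graph \<Rightarrow> 'a set \<Rightarrow> bool" where
  "gp_set G S \<longleftrightarrow> S \<subseteq> verts G \<and>
     (\<forall>u\<in>S. \<forall>v\<in>S. \<forall>w\<in>S. u \<noteq> v \<and> v \<noteq> w \<and> u \<noteq> w \<longrightarrow>
        \<not> (\<exists>P. geodesic G P \<and> {u, v, w} \<subseteq> set P))"

definition gp :: "'a graph \<Rightarrow> nat" where
  "gp G = Max {card S | S. gp_set G S}"

end

theory Submission
  imports Defs
begin

text \<open>The distance in \<open>P\<^sub>r \<boxtimes> C\<^sub>m\<close> is the maximum of the row distance and the cyclic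
distance of the columns, and three vertices lie on a common geodesic iff one of them is
metrically between the other two. Write \<open>x \<preceq> y\<close> when the row gap from \<open>x\<close> up to \<open>y\<close> is at
least their cyclic gap. Distances add along \<open>\<preceq>\<close>-chains, so a general position set has no chain
of three elements and splits into two antichains: its minimal elements and the rest. Incomparable
vertices lie in distinct columns at the cyclic distance of these columns, and among any four
points of a cycle one lies between two others; so antichains have at most three elements and
\<open>gp \<le> 6\<close> for every \<open>m \<ge> 3\<close>. For \<open>m = 2t + 1\<close> the set \<open>{0, 1} \<times> {0, t, 2t}\<close> is in general
position: distances in it are \<open>1\<close> or \<open>t\<close>, and being at distance \<open>1\<close> is an equivalence relation
on it. Hence \<open>gp = 6\<close> for all \<open>r \<ge> 2\<close> and \<open>t \<ge> 1\<close>.\<close>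

lemma is_walk_Cons:
  "is_walk G (x # xs) \<longleftrightarrow> x \<in> verts G \<and> (xs = [] \<or> adj G x (hd xs) \<and> is_walk G xs)"
  by (cases xs) (auto simp: is_walk_def nth_Cons split: nat.splits)

lemma is_walk_append:
  assumes "is_walk G xs" "is_walk G ys" "last xs = hd ys"
  shows "is_walk G (xs @ tl ys)"
  using assms
proof (induction xs)
  case Nil
  then show ?case by (simp add: is_walk_def)
next
  case (Cons x xs)
  then show ?case
    by (cases "xs = []"; cases ys) (auto simp: is_walk_Cons)
qed

lemma gp_eqI:
  assumes "gp_set G S" and "card S = k" and "\<And>S'. gp_set G S' \<Longrightarrow> card S' \<le> k"
  shows "gp G = k"
  unfolding gp_def
proof (rule Max_eqI)
  show "finite {card S |S. gp_set G S}"
    by (rule finite_subset[of _ "{..k}"]) (use assms(3) in auto)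
qed (use assms in auto)

locale shortest_path_metric =
  fixes G :: "'a graph" and d :: "'a \<Rightarrow> 'a \<Rightarrow> nat"
  assumes d_eq_0_iff: "u \<in> verts G \<Longrightarrow> v \<in> verts G \<Longrightarrow> d u v = 0 \<longleftrightarrow> u = v"
    and d_sym: "u \<in> verts G \<Longrightarrow> v \<in> verts G \<Longrightarrow> d u v = d v u"
    and d_triangle: "u \<in> verts G \<Longrightarrow> v \<in> verts G \<Longrightarrow> w \<in> verts G \<Longrightarrow> d u w \<le> d u v + d v w"
    and d_adj: "u \<in> verts G \<Longrightarrow> v \<in> verts G \<Longrightarrow> adj G u v \<Longrightarrow> d u v \<le> 1"
    and d_step: "u \<in> verts G \<Longrightarrow> v \<in> verts G \<Longrightarrow> u \<noteq> v \<Longrightarrow>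
      \<exists>w \<in> verts G. adj G u w \<and> d w v = d u v - 1"
begin

definition between :: "'a \<Rightarrow> 'a \<Rightarrow> 'a \<Rightarrow> bool" where
  "between x y z \<longleftrightarrow> d x y + d y z = d x z"

lemma walk_nth_in_verts: "is_walk G P \<Longrightarrow> i < length P \<Longrightarrow> P ! i \<in> verts G"
  by (auto simp: is_walk_def)

lemma walk_d_le:
  assumes P: "is_walk G P" and "i \<le> j" "j < length P"
  shows "d (P ! i) (P ! j) \<le> j - i"
  using assms(2,3)
proof (induction j)
  case 0
  then show ?case using d_eq_0_iff walk_nth_in_verts[OF P] by simp
next
  case (Suc j)
  show ?case
  proof (cases "i = Suc j")
    case True
    then show ?thesis using d_eq_0_iff walk_nth_in_verts[OF P] Suc.prems by simp
  next
    case False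
    then have "d (P ! i) (P ! j) \<le> j - i" using Suc by simp
    moreover have "d (P ! j) (P ! Suc j) \<le> 1"
      using P Suc.prems by (intro d_adj walk_nth_in_verts) (auto simp: is_walk_def)
    moreover have "d (P ! i) (P ! Suc j) \<le> d (P ! i) (P ! j) + d (P ! j) (P ! Suc j)"
      using P Suc.prems by (intro d_triangle walk_nth_in_verts) auto
    ultimately show ?thesis using False Suc.prems by linarith
  qed
qed

lemma walk_of_length_d:
  assumes "u \<in> verts G" "v \<in> verts G"
  shows "\<exists>P. is_walk G P \<and> hd P = u \<and> last P = v \<and> length P = Suc (d u v)"
  using assms
proof (induction "d u v" arbitrary: u)
  case 0
  then show ?case using d_eq_0_iff by (intro exI[of _ "[u]"]) (simp add: is_walk_def)
next
  case (Suc n)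
  then obtain w where w: "w \<in> verts G" "adj G u w" "d w v = n"
    using d_step d_eq_0_iff by (metis diff_Suc_1 nat.distinct(1))
  with Suc obtain P where P: "is_walk G P" "hd P = w" "last P = v" "length P = Suc n"
    by metis
  then have "P \<noteq> []" by auto
  with P w Suc.prems show ?case
    by (intro exI[of _ "u # P"]) (simp add: is_walk_Cons flip: Suc.hyps)
qed

lemma dist_eq: "u \<in> verts G \<Longrightarrow> v \<in> verts G \<Longrightarrow> dist G u v = d u v"
  unfolding dist_def
proof (rule Least_equality)
  assume "u \<in> verts G" "v \<in> verts G"
  then show "\<exists>P. is_walk G P \<and> hd P = u \<and> last P = v \<and> length P = Suc (d u v)"
    by (rule walk_of_length_d)
next
  fix n assume "\<exists>P. is_walk G P \<and> hd P = u \<and> last P = v \<and> length P = Suc n"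
  then obtain P where P: "is_walk G P" "hd P = u" "last P = v" "length P = Suc n" by blast
  then have "P \<noteq> []" by auto
  with P show "d u v \<le> n"
    using walk_d_le[OF P(1), of 0 n] by (simp add: hd_conv_nth last_conv_nth)
qed

lemma geodesic_d_nth:
  assumes P: "geodesic G P" and ij: "i \<le> j" "j < length P"
  shows "d (P ! i) (P ! j) = j - i"
proof -
  define l where "l = length P - 1"
  have "j \<le> l" using ij by (simp add: l_def)
  have W: "is_walk G P" and "P \<noteq> []" using P by (auto simp: geodesic_def is_walk_def)
  then have V: "\<And>k. k < length P \<Longrightarrow> P ! k \<in> verts G" and "l < length P"
    by (auto simp: l_def walk_nth_in_verts)
  have "hd P = P ! 0" "last P = P ! l"
    using \<open>P \<noteq> []\<close> by (simp_all add: hd_conv_nth last_conv_nth l_def)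
  then have "l = d (P ! 0) (P ! l)"
    using P V[of 0] V[of l] \<open>l < length P\<close> \<open>P \<noteq> []\<close>
    by (auto simp: geodesic_def dist_eq l_def)
  also have "\<dots> \<le> d (P ! 0) (P ! i) + d (P ! i) (P ! j) + d (P ! j) (P ! l)"
    using d_triangle[of "P ! 0" "P ! i" "P ! l"] d_triangle[of "P ! i" "P ! j" "P ! l"]
      V ij \<open>l < length P\<close> by fastforce
  also have "\<dots> \<le> i + d (P ! i) (P ! j) + (l - j)"
    using walk_d_le[OF W, of 0 i] walk_d_le[OF W, of j l] ij \<open>j \<le> l\<close> \<open>l < length P\<close> by simp
  finally show ?thesis using walk_d_le[OF W ij] \<open>j \<le> l\<close> by linarith
qed

lemma on_geodesic_between:
  assumes P: "geodesic G P" and "{x, y, z} \<subseteq> set P" and "x \<noteq> y" "y \<noteq> z" "x \<noteq> z"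
  shows "between x y z \<or> between y x z \<or> between x z y"
proof -
  have D: "d (P ! a) (P ! b) = (if a \<le> b then b - a else a - b)"
    if "a < length P" "b < length P" for a b
  proof (cases "a \<le> b")
    case False
    have "P ! a \<in> verts G" "P ! b \<in> verts G"
      using P that by (auto simp: geodesic_def walk_nth_in_verts)
    then show ?thesis using d_sym geodesic_d_nth[OF P, of b a] that False by simp
  qed (use geodesic_d_nth[OF P] that in simp)
  obtain a b c where abc: "a < length P" "b < length P" "c < length P"
    "x = P ! a" "y = P ! b" "z = P ! c"
    using assms(2) by (auto simp: in_set_conv_nth)
  then show ?thesis
    unfolding between_def using D[of a b] D[of b c] D[of a c] D[of b a] D[of c b] by auto
qed

lemma between_on_geodesic:
  assumes V: "x \<in> verts G" "y \<in> verts G" "z \<in> verts G" and "between x y z"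
  shows "\<exists>P. geodesic G P \<and> {x, y, z} \<subseteq> set P"
proof -
  obtain P1 where P1: "is_walk G P1" "hd P1 = x" "last P1 = y" "length P1 = Suc (d x y)"
    using walk_of_length_d V by blast
  obtain P2 where P2: "is_walk G P2" "hd P2 = y" "last P2 = z" "length P2 = Suc (d y z)"
    using walk_of_length_d V by blast
  have "P1 \<noteq> []" "P2 \<noteq> []" using P1 P2 by auto
  let ?P = "P1 @ tl P2"
  have "is_walk G ?P" using is_walk_append P1 P2 by metis
  moreover have "hd ?P = x" "last ?P = z"
    using P1 P2 \<open>P1 \<noteq> []\<close> \<open>P2 \<noteq> []\<close> by (cases P2; auto)+
  moreover have "length ?P = Suc (d x z)"
    using P1 P2 \<open>between x y z\<close> by (simp add: between_def)
  moreover have "{x, y, z} \<subseteq> set ?P"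
    using P1 P2 \<open>P1 \<noteq> []\<close> \<open>P2 \<noteq> []\<close> by (cases P2; auto)
  ultimately show ?thesis using V by (metis geodesic_def dist_eq)
qed

lemma on_common_geodesic_iff:
  assumes "x \<in> verts G" "y \<in> verts G" "z \<in> verts G" "x \<noteq> y" "y \<noteq> z" "x \<noteq> z"
  shows "(\<exists>P. geodesic G P \<and> {x, y, z} \<subseteq> set P) \<longleftrightarrow>
    between x y z \<or> between y x z \<or> between x z y"
  using assms on_geodesic_between between_on_geodesic[of x y z] between_on_geodesic[of y x z]
    between_on_geodesic[of x z y]
  by (auto simp: insert_commute)

lemma gp_set_iff:
  "gp_set G S \<longleftrightarrow> S \<subseteq> verts G \<and>
     (\<forall>x\<in>S. \<forall>y\<in>S. \<forall>z\<in>S. x \<noteq> y \<and> y \<noteq> z \<and> x \<noteq> z \<longrightarrow> \<not> between x y z)"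
  (is "_ \<longleftrightarrow> _ \<and> ?no_between")
proof
  assume gp: "gp_set G S"
  then have "S \<subseteq> verts G" by (simp add: gp_set_def)
  moreover have ?no_between
    using gp calculation on_common_geodesic_iff unfolding gp_set_def by (meson subsetD)
  ultimately show "S \<subseteq> verts G \<and> ?no_between" ..
next
  assume "S \<subseteq> verts G \<and> ?no_between"
  then show "gp_set G S"
    unfolding gp_set_def using on_common_geodesic_iff by (metis subsetD)
qed

lemma gp_set_not_between:
  "gp_set G S \<Longrightarrow> x \<in> S \<Longrightarrow> y \<in> S \<Longrightarrow> z \<in> S \<Longrightarrow> x \<noteq> y \<Longrightarrow> y \<noteq> z \<Longrightarrow> x \<noteq> z \<Longrightarrow>
    \<not> between x y z"
  by (simp add: gp_set_iff)

end

definition path_dist :: "nat \<Rightarrow> nat \<Rightarrow> nat" where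
  "path_dist a b = (if a \<le> b then b - a else a - b)"

definition cycle_dist :: "nat \<Rightarrow> nat \<Rightarrow> nat \<Rightarrow> nat" where
  "cycle_dist m a b = min (path_dist a b) (m - path_dist a b)"

lemma cycle_dist_sym: "cycle_dist m a b = cycle_dist m b a"
  by (simp add: cycle_dist_def path_dist_def)

lemma cycle_dist_eq_0_iff: "a < m \<Longrightarrow> b < m \<Longrightarrow> cycle_dist m a b = 0 \<longleftrightarrow> a = b"
  by (auto simp: cycle_dist_def path_dist_def)

lemma cycle_dist_triangle:
  assumes "a < m" "b < m" "c < m"
  shows "cycle_dist m a c \<le> cycle_dist m a b + cycle_dist m b c"
proof -
  let ?f = "\<lambda>x. min x (m - x)"
  have sum: "?f (x + y) \<le> ?f x + ?f y" and diff: "?f (x - y) \<le> ?f x + ?f y"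
    if "x \<le> m" "y \<le> m" for x y
    using that by (auto simp: min_def)
  consider "path_dist a c = path_dist a b + path_dist b c"
    | "path_dist a c = path_dist a b - path_dist b c"
    | "path_dist a c = path_dist b c - path_dist a b"
    unfolding path_dist_def by (cases "a \<le> b"; cases "b \<le> c"; cases "a \<le> c") auto
  moreover have "path_dist a b \<le> m" "path_dist b c \<le> m" "path_dist a c \<le> m"
    using assms by (auto simp: path_dist_def)
  ultimately show ?thesis
    unfolding cycle_dist_def by cases (metis sum, metis diff, metis diff add.commute)
qed

lemma cycle_dist_step:
  assumes "a < m" "b < m" "a \<noteq> b"
  shows "\<exists>a' < m. cycle_dist m a a' \<le> 1 \<and> cycle_dist m a' b = cycle_dist m a b - 1"
proof -
  define k where "k = path_dist a b"
  have k: "0 < k" "k < m" using assms by (auto simp: k_def path_dist_def)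
  \<comment> \<open>One step along the shorter arc from \<open>a\<close> to \<open>b\<close>: towards \<open>b\<close> on the line if
    \<open>b\<close> is at most half way round, otherwise away from it, wrapping around \<open>0\<close>.\<close>
  define a' where "a' = (if 2 * k \<le> m then (if a < b then a + 1 else a - 1)
    else if a < b then (if a = 0 then m - 1 else a - 1) else (if a + 1 = m then 0 else a + 1))"
  have "a' < m" "path_dist a a' = 1 \<or> path_dist a a' = m - 1"
    using assms by (auto simp: a'_def path_dist_def)
  moreover have "if 2 * k \<le> m then path_dist a' b = k - 1
      else path_dist a' b = k + 1 \<or> path_dist a' b = m - k - 1"
    using assms by (auto simp: a'_def k_def path_dist_def)
  ultimately show ?thesis
    using k by (intro exI[of _ a']) (auto simp: cycle_dist_def k_def[symmetric] min_def split: if_splits)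
qed

definition cylinder_dist :: "nat \<Rightarrow> nat \<times> nat \<Rightarrow> nat \<times> nat \<Rightarrow> nat" where
  "cylinder_dist m u v = max (path_dist (fst u) (fst v)) (cycle_dist m (snd u) (snd v))"

abbreviation strong_cylinder :: "nat \<Rightarrow> nat \<Rightarrow> (nat \<times> nat) graph" where
  "strong_cylinder r m \<equiv> strong_product (path_graph r) (cycle_graph m)"

lemma verts_strong_cylinder: "verts (strong_cylinder r m) = {..<r} \<times> {..<m}"
  by (simp add: verts_def strong_product_def path_graph_def cycle_graph_def)

lemma path_adj_iff: "i = j \<or> adj (path_graph r) i j \<longleftrightarrow> path_dist i j \<le> 1"
  by (auto simp: adj_def path_graph_def path_dist_def)

lemma cycle_adj_iff:
  assumes "3 \<le> m" "a < m" "b < m"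
  shows "a = b \<or> adj (cycle_graph m) a b \<longleftrightarrow> cycle_dist m a b \<le> 1"
proof -
  have "(a + 1) mod m = (if a + 1 = m then 0 else a + 1)" "(b + 1) mod m = (if b + 1 = m then 0 else b + 1)"
    using assms by auto
  then show ?thesis
    using assms by (auto simp: adj_def cycle_graph_def cycle_dist_def path_dist_def min_def)
qed

lemma adj_strong_product:
  "adj (strong_product G H) (g, h) (g', h') \<longleftrightarrow>
     (g, h) \<noteq> (g', h') \<and> (g = g' \<or> adj G g g') \<and> (h = h' \<or> adj H h h')"
  by (simp add: adj_def strong_product_def)

lemma adj_strong_cylinder_iff:
  assumes "3 \<le> m" "u \<in> verts (strong_cylinder r m)" "v \<in> verts (strong_cylinder r m)"
  shows "adj (strong_cylinder r m) u v \<longleftrightarrow> u \<noteq> v \<and> cylinder_dist m u v \<le> 1"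
  using assms path_adj_iff[of "fst u" "fst v" r] cycle_adj_iff[of m "snd u" "snd v"]
  by (cases u; cases v) (auto simp: adj_strong_product verts_strong_cylinder cylinder_dist_def)

lemma shortest_path_metric_strong_cylinder:
  assumes "3 \<le> m"
  shows "shortest_path_metric (strong_cylinder r m) (cylinder_dist m)"
proof
  fix u v w assume V: "u \<in> verts (strong_cylinder r m)" "v \<in> verts (strong_cylinder r m)"
  then show "cylinder_dist m u v = 0 \<longleftrightarrow> u = v"
    by (auto simp: cylinder_dist_def cycle_dist_eq_0_iff verts_strong_cylinder prod_eq_iff
        path_dist_def)
  show "cylinder_dist m u v = cylinder_dist m v u"
    by (simp add: cylinder_dist_def cycle_dist_sym path_dist_def)
  show "adj (strong_cylinder r m) u v \<Longrightarrow> cylinder_dist m u v \<le> 1"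
    using adj_strong_cylinder_iff[OF assms V] by simp
  show "cylinder_dist m u w \<le> cylinder_dist m u v + cylinder_dist m v w"
    if "w \<in> verts (strong_cylinder r m)"
    using that V cycle_dist_triangle[of "snd u" m "snd v" "snd w"]
    by (auto simp: cylinder_dist_def verts_strong_cylinder path_dist_def)
  show "\<exists>w \<in> verts (strong_cylinder r m). adj (strong_cylinder r m) u w \<and>
      cylinder_dist m w v = cylinder_dist m u v - 1" if "u \<noteq> v"
  proof -
    obtain i a j b where uv: "u = (i, a)" "v = (j, b)" "i < r" "a < m" "j < r" "b < m"
      using V by (auto simp: verts_strong_cylinder)
    define i' where "i' = (if i < j then i + 1 else if j < i then i - 1 else i)"
    have i': "i' < r" "path_dist i i' \<le> 1" "path_dist i' j = path_dist i j - 1"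
      using uv by (auto simp: i'_def path_dist_def)
    obtain a' where a': "a' < m" "cycle_dist m a a' \<le> 1" "cycle_dist m a' b = cycle_dist m a b - 1"
      using cycle_dist_step[of a m b] uv by (cases "a = b") (auto simp: cycle_dist_def path_dist_def)
    have W: "(i', a') \<in> verts (strong_cylinder r m)" using i' a' by (simp add: verts_strong_cylinder)
    have "cylinder_dist m (i', a') v = cylinder_dist m u v - 1"
      using i' a' uv by (simp add: cylinder_dist_def max_def)
    moreover have "cylinder_dist m u v \<noteq> 0"
      using that V
      by (auto simp: cylinder_dist_def cycle_dist_eq_0_iff verts_strong_cylinder prod_eq_iff
          path_dist_def)
    ultimately show ?thesis
      using W i' a' uv adj_strong_cylinder_iff[OF assms V(1) W] by (auto simp: cylinder_dist_def)
  qed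
qed

lemma cycle_dist_four_points:
  assumes "a < b" "b < c" "c < d" "d < m"
  shows "cycle_dist m a b + cycle_dist m b c = cycle_dist m a c \<or>
    cycle_dist m c d + cycle_dist m d a = cycle_dist m c a"
proof (cases "2 * (c - a) \<le> m")
  case True
  then have "cycle_dist m a b = b - a" "cycle_dist m b c = c - b" "cycle_dist m a c = c - a"
    using assms by (auto simp: cycle_dist_def path_dist_def min_def)
  then show ?thesis using assms by simp
next
  case False
  then have "cycle_dist m c d = d - c" "cycle_dist m d a = m - (d - a)" "cycle_dist m c a = m - (c - a)"
    using assms by (auto simp: cycle_dist_def path_dist_def min_def)
  then show ?thesis using assms by simp
qed

lemma cycle_dist_between_of_card_ge_4:
  assumes "T \<subseteq> {..<m}" "4 \<le> card T"
  shows "\<exists>a\<in>T. \<exists>b\<in>T. \<exists>c\<in>T. a \<noteq> b \<and> b \<noteq> c \<and> a \<noteq> c \<and>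
    cycle_dist m a b + cycle_dist m b c = cycle_dist m a c"
proof -
  define l where "l = sorted_list_of_set T"
  have "finite T" using assms by (metis card.infinite not_numeral_le_zero)
  then have l: "sorted_wrt (<) l" "set l = T" "4 \<le> length l"
    using assms by (simp_all add: l_def)
  then have ord: "l ! 0 < l ! 1" "l ! 1 < l ! 2" "l ! 2 < l ! 3"
    by (simp_all add: sorted_wrt_nth_less)
  have "l ! i \<in> T" if "i < 4" for i
    using l(2,3) that nth_mem[of i l] by simp
  then have mem: "l ! 0 \<in> T" "l ! 1 \<in> T" "l ! 2 \<in> T" "l ! 3 \<in> T" by simp_all
  have "l ! 3 < m" using mem(4) assms(1) by auto
  have distinct: "l ! 0 \<noteq> l ! 1" "l ! 1 \<noteq> l ! 2" "l ! 0 \<noteq> l ! 2" "l ! 2 \<noteq> l ! 3" "l ! 3 \<noteq> l ! 0"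
    using ord by auto
  from cycle_dist_four_points[OF ord \<open>l ! 3 < m\<close>] show ?thesis
  proof
    assume eq: "cycle_dist m (l ! 0) (l ! 1) + cycle_dist m (l ! 1) (l ! 2) = cycle_dist m (l ! 0) (l ! 2)"
    show ?thesis
      by (rule bexI[of _ "l ! 0"], rule bexI[of _ "l ! 1"], rule bexI[of _ "l ! 2"])
        (use mem distinct eq in auto)
  next
    assume eq: "cycle_dist m (l ! 2) (l ! 3) + cycle_dist m (l ! 3) (l ! 0) = cycle_dist m (l ! 2) (l ! 0)"
    show ?thesis
      by (rule bexI[of _ "l ! 2"], rule bexI[of _ "l ! 3"], rule bexI[of _ "l ! 0"])
        (use mem distinct eq in auto)
  qed
qed

definition cone_le :: "nat \<Rightarrow> nat \<times> nat \<Rightarrow> nat \<times> nat \<Rightarrow> bool" where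
  "cone_le m x y \<longleftrightarrow> fst x \<le> fst y \<and> cycle_dist m (snd x) (snd y) \<le> fst y - fst x"

lemma cylinder_dist_cone_le: "cone_le m x y \<Longrightarrow> cylinder_dist m x y = fst y - fst x"
  by (simp add: cone_le_def cylinder_dist_def path_dist_def)

lemma cone_le_trans:
  "snd x < m \<Longrightarrow> snd y < m \<Longrightarrow> snd z < m \<Longrightarrow> cone_le m x y \<Longrightarrow> cone_le m y z \<Longrightarrow>
    cone_le m x z"
  using cycle_dist_triangle[of "snd x" m "snd y" "snd z"] by (auto simp: cone_le_def)

lemma cone_le_antisym:
  "snd x < m \<Longrightarrow> snd y < m \<Longrightarrow> cone_le m x y \<Longrightarrow> cone_le m y x \<Longrightarrow> x = y"
  by (auto simp: cone_le_def cycle_dist_eq_0_iff prod_eq_iff)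

lemma cylinder_dist_cone_chain:
  assumes "snd x < m" "snd y < m" "snd z < m" "cone_le m x y" "cone_le m y z"
  shows "cylinder_dist m x y + cylinder_dist m y z = cylinder_dist m x z"
  using assms cone_le_trans[OF assms] by (auto simp: cylinder_dist_cone_le cone_le_def)

lemma cylinder_dist_incomparable:
  assumes "\<not> cone_le m x y" "\<not> cone_le m y x"
  shows "cylinder_dist m x y = cycle_dist m (snd x) (snd y) \<and> snd x \<noteq> snd y"
proof -
  have "path_dist (fst x) (fst y) < cycle_dist m (snd x) (snd y)"
    using assms cycle_dist_sym[of m "snd x" "snd y"]
    unfolding cone_le_def path_dist_def by (cases "fst x \<le> fst y") auto
  then show ?thesis by (auto simp: cylinder_dist_def cycle_dist_def path_dist_def)
qed

lemma gp_set_antichain_card_le_3: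
  assumes "3 \<le> m" "gp_set (strong_cylinder r m) S" "A \<subseteq> S"
    and antichain: "\<And>x y. x \<in> A \<Longrightarrow> y \<in> A \<Longrightarrow> x \<noteq> y \<Longrightarrow> \<not> cone_le m x y"
  shows "card A \<le> 3"
proof (rule ccontr)
  interpret shortest_path_metric "strong_cylinder r m" "cylinder_dist m"
    using assms(1) by (rule shortest_path_metric_strong_cylinder)
  have S: "S \<subseteq> {..<r} \<times> {..<m}"
    using assms(2) by (simp add: gp_set_iff verts_strong_cylinder)
  have dist_A: "cylinder_dist m x y = cycle_dist m (snd x) (snd y)" "snd x \<noteq> snd y"
    if "x \<in> A" "y \<in> A" "x \<noteq> y" for x y
    using cylinder_dist_incomparable antichain that by blast+
  then have "inj_on snd A" by (meson inj_onI)
  moreover assume "\<not> card A \<le> 3"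
  ultimately have "4 \<le> card (snd ` A)" by (simp add: card_image)
  moreover have "snd ` A \<subseteq> {..<m}" using S assms(3) by auto
  ultimately obtain a b c where abc: "a \<in> snd ` A" "b \<in> snd ` A" "c \<in> snd ` A"
    "a \<noteq> b" "b \<noteq> c" "a \<noteq> c" "cycle_dist m a b + cycle_dist m b c = cycle_dist m a c"
    using cycle_dist_between_of_card_ge_4[of "snd ` A" m] by blast
  then obtain x y z where xyz: "x \<in> A" "y \<in> A" "z \<in> A"
    and snd_xyz: "a = snd x" "b = snd y" "c = snd z"
    by blast
  with abc have distinct: "x \<noteq> y" "y \<noteq> z" "x \<noteq> z" by auto
  with abc xyz snd_xyz have "between x y z" by (simp add: between_def dist_A)
  with gp_set_not_between[OF assms(2)] show False
    using assms(3) xyz distinct by blast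
qed

lemma gp_set_strong_cylinder_card_le_6:
  assumes "3 \<le> m" and gp: "gp_set (strong_cylinder r m) S"
  shows "card S \<le> 6"
proof -
  interpret shortest_path_metric "strong_cylinder r m" "cylinder_dist m"
    using assms(1) by (rule shortest_path_metric_strong_cylinder)
  have snd_S: "snd x < m" if "x \<in> S" for x
    using gp that by (auto simp: gp_set_iff verts_strong_cylinder)
  define minimal where "minimal = {x \<in> S. \<forall>w \<in> S. w \<noteq> x \<longrightarrow> \<not> cone_le m w x}"
  have "minimal \<subseteq> S" by (auto simp: minimal_def)
  have "card minimal \<le> 3"
    by (rule gp_set_antichain_card_le_3[OF assms]) (auto simp: minimal_def)
  moreover have "card (S - minimal) \<le> 3"
  proof (rule gp_set_antichain_card_le_3[OF assms])
    fix y z assume yz: "y \<in> S - minimal" "z \<in> S - minimal" "y \<noteq> z"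
    then obtain w where w: "w \<in> S" "w \<noteq> y" "cone_le m w y"
      by (auto simp: minimal_def)
    show "\<not> cone_le m y z"
    proof
      assume "cone_le m y z"
      have "y \<in> S" "z \<in> S" using yz by auto
      then have "w \<noteq> z"
        using cone_le_antisym[of y m z] snd_S w(3) \<open>y \<noteq> z\<close> \<open>cone_le m y z\<close> by auto
      moreover have "between w y z"
        using cylinder_dist_cone_chain[OF snd_S[OF w(1)] snd_S[OF \<open>y \<in> S\<close>] snd_S[OF \<open>z \<in> S\<close>]
            w(3) \<open>cone_le m y z\<close>]
        by (simp add: between_def)
      ultimately show False
        using gp_set_not_between[OF gp w(1) \<open>y \<in> S\<close> \<open>z \<in> S\<close> w(2) \<open>y \<noteq> z\<close>] by blast
    qed
  qed auto
  moreover have "card S \<le> card minimal + card (S - minimal)"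
    using card_Un_le[of minimal "S - minimal"] \<open>minimal \<subseteq> S\<close> by (simp add: Un_absorb1)
  ultimately show ?thesis by linarith
qed

lemma gp_set_two_rows_three_columns:
  assumes "2 \<le> r" "1 \<le> t"
  shows "gp_set (strong_cylinder r (2 * t + 1)) ({0, 1} \<times> {0, t, 2 * t})"
proof -
  let ?m = "2 * t + 1" and ?S = "{0, 1} \<times> {0, t, 2 * t}"
  interpret shortest_path_metric "strong_cylinder r ?m" "cylinder_dist ?m"
    using assms(2) by (intro shortest_path_metric_strong_cylinder) simp
  have path_dist_S: "path_dist i j = (if i = j then 0 else 1)" if "i \<in> {0, 1}" "j \<in> {0, 1}" for i j
    using that by (auto simp: path_dist_def)
  have cycle_dist_S: "cycle_dist ?m a b = (if a = b then 0 else if (a = t) = (b = t) then 1 else t)"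
    if "a \<in> {0, t, 2 * t}" "b \<in> {0, t, 2 * t}" for a b
    using that assms(2) by (auto simp: cycle_dist_def path_dist_def)
  have dist_S: "cylinder_dist ?m x y = (if (snd x = t) = (snd y = t) then 1 else t)"
    if "x \<in> ?S" "y \<in> ?S" "x \<noteq> y" for x y
  proof -
    have "fst x \<in> {0, 1}" "fst y \<in> {0, 1}" "snd x \<in> {0, t, 2 * t}" "snd y \<in> {0, t, 2 * t}"
      using that(1,2) by (simp_all only: mem_Times_iff)
    then have "cylinder_dist ?m x y = max (if fst x = fst y then 0 else 1)
        (if snd x = snd y then 0 else if (snd x = t) = (snd y = t) then 1 else t)"
      by (simp only: cylinder_dist_def path_dist_S cycle_dist_S)
    then show ?thesis using that(3) assms(2) by (simp add: prod_eq_iff split: if_splits)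
  qed
  show ?thesis
    unfolding gp_set_iff
  proof (intro conjI ballI impI)
    show "?S \<subseteq> verts (strong_cylinder r ?m)"
      using assms by (auto simp: verts_strong_cylinder)
    fix x y z :: "nat \<times> nat"
    assume S: "x \<in> ?S" "y \<in> ?S" "z \<in> ?S" and "x \<noteq> y \<and> y \<noteq> z \<and> x \<noteq> z"
    then have "x \<noteq> y" "y \<noteq> z" "x \<noteq> z" by simp_all
    then show "\<not> between x y z"
      unfolding between_def
      using dist_S[OF S(1,2)] dist_S[OF S(2,3)] dist_S[OF S(1,3)] assms(2)
      by (simp split: if_splits)
  qed
qed

theorem theorem4p6:
  fixes r t :: nat
  assumes "r \<ge> 2" and "t \<ge> 1"
  shows "6 \<le> gp (strong_product (path_graph r) (cycle_graph (2 * t + 1))) \<and>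
         gp (strong_product (path_graph r) (cycle_graph (2 * t + 1))) \<le> 7 \<and>
         ((t \<in> {1, 2} \<or> r = 2) \<longrightarrow>
            gp (strong_product (path_graph r) (cycle_graph (2 * t + 1))) = 6)"
proof -
  have "gp (strong_cylinder r (2 * t + 1)) = 6"
  proof (rule gp_eqI)
    show "gp_set (strong_cylinder r (2 * t + 1)) ({0, 1} \<times> {0, t, 2 * t})"
      using assms by (rule gp_set_two_rows_three_columns)
    show "card ({0, 1::nat} \<times> {0, t, 2 * t}) = 6"
      unfolding card_cartesian_product using assms(2) by simp
    show "card S \<le> 6" if "gp_set (strong_cylinder r (2 * t + 1)) S" for S
      using that assms(2) by (intro gp_set_strong_cylinder_card_le_6) auto
  qed
  then show ?thesis by simp
qed

end
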